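(* Let ${\bf A}={\bf D}{\bf P}$ where ${\bf D}$ is an invertible diagonal $N\times N$ complex matrix and ${\bf P}$ is an $N\times N$ permutation matrix. If ${\bf A}$ is a linear automorphism of $L_{d,n}$, then ${\bf D}^2{\bf P}$ is a linear automorphism of $M_{d,n}$.
   Context: Let $d,n$ be positive integers, $N=\binom n2$, coordinates of $\mathbb C^N$ indexed by edges $\{i,j\}$ of $K_n$. For a complex configuration ${\bf p}$ of $n$ points in $\mathbb C^d$, $m({\bf p})$ has coordinates $m_{ij}=\sum_{k=1}^d({\bf p}_i^k-{\bf p}_j^k)^2$ (no conjugation); $M_{d,n}$ is the image of $m$; $L_{d,n}=s^{-1}(M_{d,n})$ where $s$ squares each coordinate. A linear automorphism of a variety $V\subset\mathbb C^N$ is a non-singular $N\times N$ complex matrix mapping $V$ bijectively onto itself. *)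

theory Defs
  imports "Jordan_Normal_Form.Determinant" "HOL-Combinatorics.Permutations"
begin

text \<open>Edges {i,j} (i<j<n) of the complete graph K_n, enumerated in a fixed order;
  coordinate k of C^N corresponds to the edge (edge_list n ! k).\<close>
definition edge_list :: "nat \<Rightarrow> (nat \<times> nat) list" where
  "edge_list n = concat (map (\<lambda>j. map (\<lambda>i. (i, j)) [0..<j]) [0..<n])"

definition Nn :: "nat \<Rightarrow> nat" where
  "Nn n = n choose 2"

text \<open>A configuration p: point i has coordinates p i k, k < d (entries outside are irrelevant).\<close>
definition mmap :: "nat \<Rightarrow> nat \<Rightarrow> (nat \<Rightarrow> nat \<Rightarrow> complex) \<Rightarrow> complex vec" where
  "mmap d n p = vec (Nn n) (\<lambda>k. case edge_list n ! k of (i, j) \<Rightarrow>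
        \<Sum>c<d. (p i c - p j c)^2)"

definition Mdn :: "nat \<Rightarrow> nat \<Rightarrow> complex vec set" where
  "Mdn d n = {mmap d n p | p. True}"

definition sq_map :: "complex vec \<Rightarrow> complex vec" where
  "sq_map x = map_vec (\<lambda>z. z^2) x"

definition Ldn :: "nat \<Rightarrow> nat \<Rightarrow> complex vec set" where
  "Ldn d n = {x \<in> carrier_vec (Nn n). sq_map x \<in> Mdn d n}"

definition linear_automorphism :: "nat \<Rightarrow> complex mat \<Rightarrow> complex vec set \<Rightarrow> bool" where
  "linear_automorphism N A V \<longleftrightarrow> A \<in> carrier_mat N N \<and> det A \<noteq> 0 \<and>
     bij_betw (\<lambda>x. A *\<^sub>v x) V V"

definition permutation_matrix :: "nat \<Rightarrow> complex mat \<Rightarrow> bool" where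
  "permutation_matrix N P \<longleftrightarrow> (\<exists>\<sigma>. \<sigma> permutes {..<N} \<and>
     P = mat N N (\<lambda>(i, j). if \<sigma> i = j then 1 else 0))"

end

theory Submission
  imports Defs
begin

text \<open>\<open>D P\<close> sends \<open>x\<close> to the vector with entries \<open>D\<^sub>i\<^sub>i x\<^sub>\<sigma>\<^sub>(\<^sub>i\<^sub>)\<close>, so squaring
  every coordinate intertwines it with \<open>D\<^sup>2 P\<close>: \<open>s (D P x) = D\<^sup>2 P (s x)\<close>. Since every complex
  number has a square root, \<open>s\<close> maps \<open>L\<^sub>d\<^sub>,\<^sub>n\<close> onto \<open>M\<^sub>d\<^sub>,\<^sub>n\<close>; hence \<open>D\<^sup>2 P\<close> maps \<open>M\<^sub>d\<^sub>,\<^sub>n\<close> onto itself,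
  and it is injective because its determinant \<open>det D \<cdot> det (D P)\<close> is non-zero.\<close>

definition perm_mat :: "nat \<Rightarrow> (nat \<Rightarrow> nat) \<Rightarrow> 'a :: zero_neq_one mat" where
  "perm_mat N \<sigma> = mat N N (\<lambda>(i, j). if \<sigma> i = j then 1 else 0)"

lemma permutation_matrixE:
  assumes "permutation_matrix N P"
  obtains \<sigma> where "\<sigma> permutes {..<N}" "P = perm_mat N \<sigma>"
  using assms unfolding permutation_matrix_def perm_mat_def by blast

lemma perm_mat_carrier [simp]: "perm_mat N \<sigma> \<in> carrier_mat N N"
  by (simp add: perm_mat_def)

lemma perm_mat_mult_vec:
  fixes x :: "'a :: semiring_1 vec"
  assumes "\<sigma> permutes {..<N}" "x \<in> carrier_vec N"
  shows "perm_mat N \<sigma> *\<^sub>v x = vec N (\<lambda>i. x $ \<sigma> i)"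
proof (rule eq_vecI)
  fix i assume "i < dim_vec (vec N (\<lambda>i. x $ \<sigma> i))"
  then have i: "i < N" by simp
  then have "\<sigma> i < N" using assms(1) by (meson lessThan_iff permutes_in_image)
  moreover have "(perm_mat N \<sigma> *\<^sub>v x) $ i = (\<Sum>j\<in>{0..<N}. (if \<sigma> i = j then 1 else 0) * x $ j)"
    using assms(2) i by (simp add: perm_mat_def scalar_prod_def)
  ultimately show "(perm_mat N \<sigma> *\<^sub>v x) $ i = vec N (\<lambda>i. x $ \<sigma> i) $ i"
    using i by (simp add: if_distrib[of "\<lambda>c. c * _"] cong: if_cong)
qed (simp add: perm_mat_def)

lemma diagonal_mat_mult_vec:
  fixes D :: "'a :: semiring_1 mat"
  assumes "D \<in> carrier_mat N N" "diagonal_mat D" "y \<in> carrier_vec N"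
  shows "D *\<^sub>v y = vec N (\<lambda>i. D $$ (i, i) * y $ i)"
proof (rule eq_vecI)
  fix i assume "i < dim_vec (vec N (\<lambda>i. D $$ (i, i) * y $ i))"
  then have i: "i < N" by simp
  have "(D *\<^sub>v y) $ i = (\<Sum>j\<in>{0..<N}. D $$ (i, j) * y $ j)"
    using assms i by (simp add: scalar_prod_def)
  also have "\<dots> = (\<Sum>j\<in>{0..<N}. if j = i then D $$ (i, i) * y $ i else 0)"
    using assms i unfolding diagonal_mat_def by (intro sum.cong) auto
  finally show "(D *\<^sub>v y) $ i = vec N (\<lambda>i. D $$ (i, i) * y $ i) $ i"
    using i by simp
qed (use assms in simp)

lemma sq_map_carrier [simp]: "sq_map x \<in> carrier_vec N \<longleftrightarrow> x \<in> carrier_vec N"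
  by (simp add: sq_map_def)

lemma sq_map_perm_mat_mult_vec:
  assumes "\<sigma> permutes {..<N}" "x \<in> carrier_vec N"
  shows "sq_map (perm_mat N \<sigma> *\<^sub>v x) = perm_mat N \<sigma> *\<^sub>v sq_map x"
proof -
  have "\<sigma> i < N" if "i < N" for i
    using assms(1) that by (meson lessThan_iff permutes_in_image)
  then show ?thesis
    using assms by (simp add: perm_mat_mult_vec sq_map_def vec_eq_iff)
qed

lemma sq_map_diagonal_mat_mult_vec:
  assumes "D \<in> carrier_mat N N" "diagonal_mat D" "y \<in> carrier_vec N"
  shows "sq_map (D *\<^sub>v y) = (D * D) *\<^sub>v sq_map y"
proof -
  have "(D * D) *\<^sub>v sq_map y = D *\<^sub>v (D *\<^sub>v sq_map y)"
    using assms by (simp add: assoc_mult_mat_vec)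
  then show ?thesis
    using assms by (simp add: diagonal_mat_mult_vec sq_map_def power2_eq_square vec_eq_iff)
qed

lemma inj_on_mult_mat_vec_det:
  fixes A :: "'a :: idom mat"
  assumes A: "A \<in> carrier_mat n n" and det: "det A \<noteq> 0"
  shows "inj_on (\<lambda>x. A *\<^sub>v x) (carrier_vec n)"
proof (rule inj_onI)
  fix x y assume x: "x \<in> carrier_vec n" and y: "y \<in> carrier_vec n" and eq: "A *\<^sub>v x = A *\<^sub>v y"
  have "A *\<^sub>v (x - y) = 0\<^sub>v n"
    using eq A x y by (simp add: mult_minus_distrib_mat_vec)
  moreover have "x - y \<in> carrier_vec n"
    using x y by simp
  moreover have "\<not> (\<exists>v. v \<in> carrier_vec n \<and> v \<noteq> 0\<^sub>v n \<and> A *\<^sub>v v = 0\<^sub>v n)"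
    using det_0_iff_vec_prod_zero[OF A] det by simp
  ultimately have "x - y = 0\<^sub>v n"
    by auto
  then show "x = y"
    using x y by (simp add: vec_eq_iff)
qed

lemma Mdn_carrier: "Mdn d n \<subseteq> carrier_vec (Nn n)"
  unfolding Mdn_def mmap_def by auto

lemma sq_map_image_Ldn: "sq_map ` Ldn d n = Mdn d n"
proof
  show "sq_map ` Ldn d n \<subseteq> Mdn d n"
    unfolding Ldn_def by auto
  show "Mdn d n \<subseteq> sq_map ` Ldn d n"
  proof
    fix y assume y: "y \<in> Mdn d n"
    then have "y \<in> carrier_vec (Nn n)" using Mdn_carrier by auto
    moreover have "sq_map (map_vec csqrt y) = y"
      by (rule eq_vecI) (simp_all add: sq_map_def)
    ultimately show "y \<in> sq_map ` Ldn d n"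
      using y unfolding Ldn_def by (intro image_eqI[of y _ "map_vec csqrt y"]) auto
  qed
qed

lemma linear_automorphism_intertwined:
  assumes "linear_automorphism N A L"
    and "f ` L = M" "M \<subseteq> carrier_vec N"
    and "\<And>x. x \<in> L \<Longrightarrow> f (A *\<^sub>v x) = B *\<^sub>v f x"
    and "B \<in> carrier_mat N N" "det B \<noteq> 0"
  shows "linear_automorphism N B M"
proof -
  have "(\<lambda>y. B *\<^sub>v y) ` M = f ` (\<lambda>x. A *\<^sub>v x) ` L"
    using assms(2,4) by (force simp: image_image)
  also have "\<dots> = M"
    using assms(1,2) by (simp add: linear_automorphism_def bij_betw_def)
  finally have "(\<lambda>y. B *\<^sub>v y) ` M = M" .
  moreover have "inj_on (\<lambda>y. B *\<^sub>v y) M"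
    using inj_on_mult_mat_vec_det[OF assms(5,6)] assms(3) by (rule inj_on_subset)
  ultimately show ?thesis
    using assms(5,6) by (simp add: linear_automorphism_def bij_betw_def)
qed

theorem lemma5p6:
  fixes d n :: nat and D P :: "complex mat"
  assumes "0 < d" and "0 < n"
    and "D \<in> carrier_mat (Nn n) (Nn n)" and "diagonal_mat D" and "det D \<noteq> 0"
    and "permutation_matrix (Nn n) P"
    and "linear_automorphism (Nn n) (D * P) (Ldn d n)"
  shows "linear_automorphism (Nn n) (D * D * P) (Mdn d n)"
proof (rule linear_automorphism_intertwined[OF assms(7) sq_map_image_Ldn Mdn_carrier])
  obtain \<sigma> where \<sigma>: "\<sigma> permutes {..<Nn n}" and P: "P = perm_mat (Nn n) \<sigma>"
    using assms(6) by (rule permutation_matrixE)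
  note D = assms(3,4)
  have Pc: "P \<in> carrier_mat (Nn n) (Nn n)" and DDc: "D * D \<in> carrier_mat (Nn n) (Nn n)"
    using D by (simp_all add: P)
  show "sq_map ((D * P) *\<^sub>v x) = (D * D * P) *\<^sub>v sq_map x" if "x \<in> Ldn d n" for x
  proof -
    have x: "x \<in> carrier_vec (Nn n)" using that by (simp add: Ldn_def)
    have "sq_map ((D * P) *\<^sub>v x) = sq_map (D *\<^sub>v (P *\<^sub>v x))"
      using assoc_mult_mat_vec[OF D(1) Pc x] by simp
    also have "\<dots> = (D * D) *\<^sub>v sq_map (P *\<^sub>v x)"
      using D Pc x by (simp add: sq_map_diagonal_mat_mult_vec)
    also have "\<dots> = (D * D) *\<^sub>v (P *\<^sub>v sq_map x)"
      using sq_map_perm_mat_mult_vec[OF \<sigma> x] by (simp add: P)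
    also have "\<dots> = (D * D * P) *\<^sub>v sq_map x"
      using assoc_mult_mat_vec[OF DDc Pc] x by simp
    finally show ?thesis .
  qed
  show "D * D * P \<in> carrier_mat (Nn n) (Nn n)"
    using DDc Pc by (rule mult_carrier_mat)
  have "det (D * D * P) = det D * det (D * P)"
    using assoc_mult_mat[OF D(1) D(1) Pc] det_mult[OF D(1) mult_carrier_mat[OF D(1) Pc]] by simp
  then show "det (D * D * P) \<noteq> 0"
    using assms(5,7) by (simp add: linear_automorphism_def)
qed

end
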